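(* Let $V$ be a finite set, $\{\eta(t),t\ge0\}$ a consistent configuration process on $\Omega$, and $\mathbf x=(x_1,\dots,x_n)\in V_n$. Then for all $v\in V$ and $t\ge0$, $$\mathbb E_{\phi(\mathbf x)}[\eta_v(t)]=\sum_{j=1}^n\mathbf P_{x_j}\big(X^{\mathrm{rw}}(t)=v\big),$$ where $\mathbf P_u$ is the law of the random walk $X^{\mathrm{rw}}$ associated to $\{\eta(t)\}$ started at $u$.
   Context: $\Lambda\subseteq\mathbb N_0$; $\Omega_n=\{\eta\in\Lambda^V:\sum_x\eta_x=n\}$, $\Omega=\bigcup_n\Omega_n$; $\phi(\mathbf y)=\sum_i\delta_{y_i}$; $V_n=\{\mathbf x\in V^n:\phi(\mathbf x)\in\Omega_n\}$. A configuration process is a particle-number-conserving Markov process on $\Omega$ with generator $\mathcal L$; it is consistent if $[\mathcal L,\mathcal A]=0$, where $\mathcal Af(\eta)=\sum_{x}\eta_xf(\eta-\delta_x)$ (terms with $\eta_x=0$ vanish). The associated random walk $\{X^{\mathrm{rw}}(t)\}$ on $V$ is defined by: when $\eta(0)=\delta_u$, then $\eta(t)=\delta_{X^{\mathrm{rw}}(t)}$ with $X^{\mathrm{rw}}(0)=u$ (i.e. it is the motion of a single particle). *)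

theory Defs
  imports "HOL-Analysis.Analysis"
begin

definition delta :: "'v \<Rightarrow> 'v \<Rightarrow> nat" where
  "delta u = (\<lambda>y. if y = u then 1 else 0)"

definition Omega :: "nat set \<Rightarrow> ('v::finite \<Rightarrow> nat) set" where
  "Omega Lam = {\<eta>. \<forall>x. \<eta> x \<in> Lam}"

definition npart :: "('v::finite \<Rightarrow> nat) \<Rightarrow> nat" where
  "npart \<eta> = (\<Sum>x\<in>UNIV. \<eta> x)"

definition Omega_n :: "nat set \<Rightarrow> nat \<Rightarrow> ('v::finite \<Rightarrow> nat) set" where
  "Omega_n Lam n = {\<eta> \<in> Omega Lam. npart \<eta> = n}"

text \<open>phi(y_1,...,y_n) = sum_i delta_{y_i}\<close>
definition phi :: "'v list \<Rightarrow> 'v \<Rightarrow> nat" where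
  "phi ys = (\<lambda>v. length (filter (\<lambda>y. y = v) ys))"

definition gen :: "nat set \<Rightarrow> (('v::finite \<Rightarrow> nat) \<Rightarrow> ('v \<Rightarrow> nat) \<Rightarrow> real)
    \<Rightarrow> (('v \<Rightarrow> nat) \<Rightarrow> real) \<Rightarrow> ('v \<Rightarrow> nat) \<Rightarrow> real" where
  "gen Lam q f \<eta> = (\<Sum>\<xi>\<in>Omega_n Lam (npart \<eta>). q \<eta> \<xi> * (f \<xi> - f \<eta>))"

definition is_config_process :: "nat set \<Rightarrow> (('v::finite \<Rightarrow> nat) \<Rightarrow> ('v \<Rightarrow> nat) \<Rightarrow> real) \<Rightarrow> bool" where
  "is_config_process Lam q \<longleftrightarrow>
     (\<forall>\<eta>\<in>Omega Lam. \<forall>\<xi>\<in>Omega Lam. \<xi> \<noteq> \<eta> \<longrightarrow> q \<eta> \<xi> \<ge> 0)"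

definition annih :: "(('v::finite \<Rightarrow> nat) \<Rightarrow> real) \<Rightarrow> ('v \<Rightarrow> nat) \<Rightarrow> real" where
  "annih f \<eta> = (\<Sum>x\<in>UNIV. real (\<eta> x) * f (\<lambda>y. \<eta> y - delta x y))"

definition consistent :: "nat set \<Rightarrow> (('v::finite \<Rightarrow> nat) \<Rightarrow> ('v \<Rightarrow> nat) \<Rightarrow> real) \<Rightarrow> bool" where
  "consistent Lam q \<longleftrightarrow>
     (\<forall>f. \<forall>\<eta>\<in>Omega Lam. gen Lam q (annih f) \<eta> = annih (gen Lam q f) \<eta>)"

text \<open>Expectation E_eta[f(eta(t))] = (e^{tL} f)(eta); on each finite Omega_n the
  process is a finite-state continuous-time Markov chain, whose semigroup is the
  exponential of its generator.\<close>
definition expect :: "nat set \<Rightarrow> (('v::finite \<Rightarrow> nat) \<Rightarrow> ('v \<Rightarrow> nat) \<Rightarrow> real)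
    \<Rightarrow> real \<Rightarrow> (('v \<Rightarrow> nat) \<Rightarrow> real) \<Rightarrow> ('v \<Rightarrow> nat) \<Rightarrow> real" where
  "expect Lam q t f \<eta> = (\<Sum>k. t ^ k / fact k * ((gen Lam q ^^ k) f) \<eta>)"

text \<open>P_u(X^rw(t) = v): single particle started at u is at v at time t.\<close>
definition rw_prob :: "nat set \<Rightarrow> (('v::finite \<Rightarrow> nat) \<Rightarrow> ('v \<Rightarrow> nat) \<Rightarrow> real)
    \<Rightarrow> real \<Rightarrow> 'v \<Rightarrow> 'v \<Rightarrow> real" where
  "rw_prob Lam q t u v = expect Lam q t (\<lambda>\<eta>. if \<eta> = delta v then 1 else 0) (delta u)"

end

theory Submission
  imports Defs
begin

text \<open>The proof works at the level of the power series defining \<open>expect\<close>. On configurations with \<open>m + 1\<close>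
  particles, \<open>particle_sum h = \<A>\<^sup>m h / m!\<close>, so consistency (\<open>\<L>\<close> commutes
  with \<open>\<A>\<close>) gives \<open>\<L>\<^sup>k (particle_sum h) = particle_sum (\<L>\<^sup>k h)\<close>. The exponential
  series converge absolutely because each \<open>\<L>\<close> only sees the finitely many
  configurations with a fixed particle number, so the identity passes to
  \<open>expect\<close>. Taking \<open>h\<close> the indicator of \<open>\<delta>\<^sub>v\<close> turns \<open>particle_sum h\<close> into
  the occupation \<open>\<eta>\<^sub>v\<close>, and evaluating at \<open>\<phi>(x)\<close> gives the sum over the
  particles \<open>x\<^sub>j\<close>.\<close>

definition particle_sum :: "(('v::finite \<Rightarrow> nat) \<Rightarrow> real) \<Rightarrow> ('v \<Rightarrow> nat) \<Rightarrow> real" where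
  "particle_sum h \<eta> = (\<Sum>y\<in>UNIV. real (\<eta> y) * h (delta y))"

lemma delta_eq_iff: "delta u = delta v \<longleftrightarrow> u = v"
  unfolding delta_def by (metis one_neq_zero)

lemma npart_eq_1_imp_delta:
  fixes \<eta> :: "'v::finite \<Rightarrow> nat"
  assumes "npart \<eta> = 1"
  obtains y where "\<eta> = delta y"
proof -
  obtain y where "\<eta> y \<noteq> 0"
    using assms unfolding npart_def by (metis sum.neutral zero_neq_one)
  have "\<eta> y + (\<Sum>x\<in>UNIV - {y}. \<eta> x) = 1"
    using assms unfolding npart_def by (simp add: sum.remove)
  with \<open>\<eta> y \<noteq> 0\<close> have "\<eta> y = 1" and "(\<Sum>x\<in>UNIV - {y}. \<eta> x) = 0"
    by arith+
  then have "\<eta> = delta y"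
    unfolding delta_def by auto
  then show ?thesis ..
qed

lemma npart_remove:
  fixes \<eta> :: "'v::finite \<Rightarrow> nat"
  assumes "\<eta> x > 0"
  shows "npart (\<lambda>y. \<eta> y - delta x y) = npart \<eta> - 1"
proof -
  have "(\<Sum>y\<in>UNIV. \<eta> y - delta x y) = (\<Sum>y\<in>UNIV. \<eta> y) - (\<Sum>y\<in>UNIV. delta x y)"
    by (rule sum_subtractf_nat) (use assms in \<open>auto simp: delta_def\<close>)
  then show ?thesis
    by (simp add: npart_def delta_def)
qed

lemma Omega_remove:
  assumes "\<And>k j. k \<in> Lam \<Longrightarrow> j \<le> k \<Longrightarrow> j \<in> Lam"
    and "\<eta> \<in> Omega Lam"
  shows "(\<lambda>y. \<eta> y - delta x y) \<in> Omega Lam"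
  using assms unfolding Omega_def by (blast intro: diff_le_self)

lemma finite_npart_eq: "finite {\<eta> :: 'v::finite \<Rightarrow> nat. npart \<eta> = n}"
proof (rule finite_subset)
  show "{\<eta> :: 'v \<Rightarrow> nat. npart \<eta> = n} \<subseteq> PiE UNIV (\<lambda>_. {..n})"
  proof
    fix \<eta> :: "'v \<Rightarrow> nat"
    assume "\<eta> \<in> {\<eta>. npart \<eta> = n}"
    moreover have "\<eta> x \<le> npart \<eta>" for x
      unfolding npart_def by (rule member_le_sum) auto
    ultimately show "\<eta> \<in> PiE UNIV (\<lambda>_. {..n})"
      by auto
  qed
qed (auto intro: finite_PiE)

lemma particle_sum_delta: "particle_sum h (delta u) = h (delta u)"
proof -
  have "particle_sum h (delta u) = (\<Sum>y\<in>UNIV. if y = u then h (delta y) else 0)"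
    unfolding particle_sum_def by (rule sum.cong) (auto simp: delta_def)
  then show ?thesis
    by simp
qed

lemma particle_sum_add:
  "particle_sum h (\<lambda>y. \<eta> y + \<zeta> y) = particle_sum h \<eta> + particle_sum h \<zeta>"
  by (simp add: particle_sum_def distrib_right sum.distrib)

lemma particle_sum_phi:
  "particle_sum h (phi xs) = (\<Sum>j<length xs. h (delta (xs ! j)))"
proof (induction xs)
  case Nil
  then show ?case
    by (simp add: particle_sum_def phi_def)
next
  case (Cons a xs)
  have "phi (a # xs) = (\<lambda>y. delta a y + phi xs y)"
    by (auto simp: phi_def delta_def)
  then have "particle_sum h (phi (a # xs)) = h (delta a) + particle_sum h (phi xs)"
    by (simp add: particle_sum_add particle_sum_delta)
  with Cons.IH show ?case
    by (simp del: sum.lessThan_Suc add: sum.lessThan_Suc_shift)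
qed

lemma particle_sum_indicator:
  "particle_sum (\<lambda>\<xi>. if \<xi> = delta v then 1 else 0) = (\<lambda>\<eta>. real (\<eta> v))"
proof
  fix \<eta> :: "'a \<Rightarrow> nat"
  have "particle_sum (\<lambda>\<xi>. if \<xi> = delta v then 1 else 0) \<eta>
      = (\<Sum>y\<in>UNIV. if y = v then real (\<eta> y) else 0)"
    unfolding particle_sum_def by (rule sum.cong) (auto simp: delta_eq_iff)
  then show "particle_sum (\<lambda>\<xi>. if \<xi> = delta v then 1 else 0) \<eta> = real (\<eta> v)"
    by simp
qed

lemma annih_cong:
  assumes "\<And>x. \<eta> x > 0 \<Longrightarrow> f (\<lambda>y. \<eta> y - delta x y) = g (\<lambda>y. \<eta> y - delta x y)"
  shows "annih f \<eta> = annih g \<eta>"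
  unfolding annih_def using assms by (intro sum.cong) fastforce+

lemma annih_particle_sum:
  "annih (particle_sum h) \<eta> = (real (npart \<eta>) - 1) * particle_sum h \<eta>"
proof -
  let ?H = "\<lambda>y. h (delta y)"
  have remove: "real (\<eta> x) * particle_sum h (\<lambda>y. \<eta> y - delta x y)
      = real (\<eta> x) * (particle_sum h \<eta> - ?H x)" for x
  proof (cases "\<eta> x = 0")
    case False
    have "particle_sum h (\<lambda>y. \<eta> y - delta x y)
        = (\<Sum>y\<in>UNIV. real (\<eta> y) * ?H y - (if y = x then ?H y else 0))"
      unfolding particle_sum_def
      by (rule sum.cong) (use False in \<open>auto simp: delta_def of_nat_diff algebra_simps\<close>)
    then show ?thesis
      by (simp add: sum_subtractf particle_sum_def)
  qed simp
  have "annih (particle_sum h) \<eta> = (\<Sum>x\<in>UNIV. real (\<eta> x) * (particle_sum h \<eta> - ?H x))"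
    unfolding annih_def by (rule sum.cong[OF refl remove])
  also have "\<dots> = real (npart \<eta>) * particle_sum h \<eta> - particle_sum h \<eta>"
    by (simp add: right_diff_distrib sum_subtractf sum_distrib_right npart_def particle_sum_def)
  finally show ?thesis
    by (simp add: algebra_simps)
qed

lemma annih_power_eq_particle_sum:
  "npart \<eta> = Suc m \<Longrightarrow> (annih ^^ m) h \<eta> = fact m * particle_sum h \<eta>"
proof (induction m arbitrary: \<eta>)
  case 0
  then obtain y where "\<eta> = delta y"
    using npart_eq_1_imp_delta by fastforce
  then show ?case
    by (simp add: particle_sum_delta)
next
  case (Suc m)
  have "(annih ^^ Suc m) h \<eta> = annih (\<lambda>\<xi>. fact m * particle_sum h \<xi>) \<eta>"
    by (auto intro!: annih_cong Suc.IH simp: npart_remove Suc.prems)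
  also have "\<dots> = fact m * annih (particle_sum h) \<eta>"
    by (simp add: annih_def sum_distrib_left mult_ac)
  also have "\<dots> = fact (Suc m) * particle_sum h \<eta>"
    by (simp add: annih_particle_sum Suc.prems algebra_simps)
  finally show ?case .
qed

lemma gen_cong:
  assumes "\<And>\<xi>. \<xi> \<in> Omega_n Lam (npart \<eta>) \<Longrightarrow> f \<xi> = g \<xi>" and "f \<eta> = g \<eta>"
  shows "gen Lam q f \<eta> = gen Lam q g \<eta>"
  unfolding gen_def using assms by (intro sum.cong) auto

lemma gen_power_cong:
  assumes "\<And>\<xi>. \<xi> \<in> Omega_n Lam n \<Longrightarrow> f \<xi> = g \<xi>" and "\<eta> \<in> Omega_n Lam n"
  shows "(gen Lam q ^^ k) f \<eta> = (gen Lam q ^^ k) g \<eta>"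
  using assms(2)
proof (induction k arbitrary: \<eta>)
  case 0
  then show ?case
    using assms(1) by simp
next
  case (Suc k)
  then have "npart \<eta> = n"
    by (simp add: Omega_n_def)
  with Suc have "gen Lam q ((gen Lam q ^^ k) f) \<eta> = gen Lam q ((gen Lam q ^^ k) g) \<eta>"
    by (intro gen_cong) simp_all
  then show ?case
    by simp
qed

lemma gen_scale: "gen Lam q (\<lambda>\<eta>. c * f \<eta>) = (\<lambda>\<eta>. c * gen Lam q f \<eta>)"
  by (rule ext) (simp add: gen_def sum_distrib_left algebra_simps)

lemma gen_power_scale:
  "(gen Lam q ^^ k) (\<lambda>\<eta>. c * f \<eta>) = (\<lambda>\<eta>. c * (gen Lam q ^^ k) f \<eta>)"
  by (induction k) (simp_all add: gen_scale)

lemma gen_power_zero: "(gen Lam q ^^ k) (\<lambda>\<eta>. 0) = (\<lambda>\<eta>. 0)"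
  by (induction k) (simp_all add: gen_def)

lemma gen_power_annih_commute:
  assumes "consistent Lam q" and "\<eta> \<in> Omega Lam"
  shows "(gen Lam q ^^ k) (annih f) \<eta> = annih ((gen Lam q ^^ k) f) \<eta>"
  using assms(2)
proof (induction k arbitrary: \<eta>)
  case (Suc k)
  have "(gen Lam q ^^ Suc k) (annih f) \<eta> = gen Lam q ((gen Lam q ^^ k) (annih f)) \<eta>"
    by simp
  also have "\<dots> = gen Lam q (annih ((gen Lam q ^^ k) f)) \<eta>"
    using Suc by (intro gen_cong) (auto simp: Omega_n_def)
  also have "\<dots> = annih ((gen Lam q ^^ Suc k) f) \<eta>"
    using assms(1) Suc.prems by (simp add: consistent_def)
  finally show ?case .
qed simp

lemma gen_power_annih_power_commute:
  assumes "consistent Lam q"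
    and down: "\<And>k j. k \<in> Lam \<Longrightarrow> j \<le> k \<Longrightarrow> j \<in> Lam"
    and "\<eta> \<in> Omega Lam"
  shows "(gen Lam q ^^ k) ((annih ^^ m) f) \<eta> = (annih ^^ m) ((gen Lam q ^^ k) f) \<eta>"
  using assms(3)
proof (induction m arbitrary: \<eta>)
  case (Suc m)
  have "(gen Lam q ^^ k) ((annih ^^ Suc m) f) \<eta> = annih ((gen Lam q ^^ k) ((annih ^^ m) f)) \<eta>"
    using gen_power_annih_commute[OF assms(1) Suc.prems] by simp
  also have "\<dots> = (annih ^^ Suc m) ((gen Lam q ^^ k) f) \<eta>"
    using Suc.IH[OF Omega_remove[OF down Suc.prems]] by (simp, intro annih_cong) simp
  finally show ?case .
qed simp

lemma gen_power_bound:
  fixes h :: "('v::finite \<Rightarrow> nat) \<Rightarrow> real"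
    and n :: nat and q :: "('v \<Rightarrow> nat) \<Rightarrow> ('v \<Rightarrow> nat) \<Rightarrow> real"
  defines "S \<equiv> {\<xi> :: 'v \<Rightarrow> nat. npart \<xi> = n}"
  defines "Q \<equiv> (\<Sum>\<eta>\<in>S. \<Sum>\<xi>\<in>S. \<bar>q \<eta> \<xi>\<bar>)" and "B \<equiv> (\<Sum>\<zeta>\<in>S. \<bar>h \<zeta>\<bar>)"
  assumes \<eta>_in: "\<eta> \<in> S"
  shows "\<bar>(gen Lam q ^^ k) h \<eta>\<bar> \<le> (2 * Q) ^ k * B"
proof -
  have fin: "finite S"
    unfolding S_def by (rule finite_npart_eq)
  from \<eta>_in show ?thesis
  proof (induction k arbitrary: \<eta>)
    case 0
    then show ?case
      unfolding B_def using member_le_sum[OF 0 _ fin, of "\<lambda>\<zeta>. \<bar>h \<zeta>\<bar>"] by simp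
  next
    case (Suc k)
    let ?g = "(gen Lam q ^^ k) h" and ?M = "(2 * Q) ^ k * B"
    have "0 \<le> ?M"
      unfolding Q_def B_def by (simp add: sum_nonneg)
    have sub: "Omega_n Lam (npart \<eta>) \<subseteq> S"
      using Suc.prems by (auto simp: S_def Omega_n_def)
    have "\<bar>(gen Lam q ^^ Suc k) h \<eta>\<bar> \<le> (\<Sum>\<xi>\<in>Omega_n Lam (npart \<eta>). \<bar>q \<eta> \<xi> * (?g \<xi> - ?g \<eta>)\<bar>)"
      by (simp add: gen_def sum_abs)
    also have "\<dots> \<le> (\<Sum>\<xi>\<in>Omega_n Lam (npart \<eta>). \<bar>q \<eta> \<xi>\<bar> * (2 * ?M))"
    proof (rule sum_mono)
      fix \<xi> :: "'v \<Rightarrow> nat"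
      assume "\<xi> \<in> Omega_n Lam (npart \<eta>)"
      then have "\<bar>?g \<xi> - ?g \<eta>\<bar> \<le> 2 * ?M"
        using Suc.IH[of \<xi>] Suc.IH[OF Suc.prems] sub by fastforce
      then show "\<bar>q \<eta> \<xi> * (?g \<xi> - ?g \<eta>)\<bar> \<le> \<bar>q \<eta> \<xi>\<bar> * (2 * ?M)"
        by (simp add: abs_mult mult_left_mono)
    qed
    also have "\<dots> \<le> (\<Sum>\<xi>\<in>S. \<bar>q \<eta> \<xi>\<bar>) * (2 * ?M)"
      unfolding sum_distrib_right[symmetric] using fin sub \<open>0 \<le> ?M\<close>
      by (intro mult_right_mono sum_mono2) auto
    also have "\<dots> \<le> Q * (2 * ?M)"
    proof (rule mult_right_mono)
      show "(\<Sum>\<xi>\<in>S. \<bar>q \<eta> \<xi>\<bar>) \<le> Q"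
        unfolding Q_def using fin Suc.prems by (intro member_le_sum) (auto simp: sum_nonneg)
    qed (use \<open>0 \<le> ?M\<close> in simp)
    finally show ?case
      by (simp add: mult_ac)
  qed
qed

lemma summable_gen_power_series:
  "summable (\<lambda>k. t ^ k / fact k * (gen Lam q ^^ k) h \<eta>)"
proof -
  define S where "S = {\<xi> :: 'a \<Rightarrow> nat. npart \<xi> = npart \<eta>}"
  define Q where "Q = (\<Sum>\<eta>\<in>S. \<Sum>\<xi>\<in>S. \<bar>q \<eta> \<xi>\<bar>)"
  define B where "B = (\<Sum>\<zeta>\<in>S. \<bar>h \<zeta>\<bar>)"
  have bound: "\<bar>(gen Lam q ^^ k) h \<eta>\<bar> \<le> (2 * Q) ^ k * B" for k
    unfolding Q_def B_def S_def by (rule gen_power_bound) simp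
  have majorant: "norm (t ^ k / fact k * (gen Lam q ^^ k) h \<eta>) \<le> B * (inverse (fact k) * (\<bar>t\<bar> * (2 * Q)) ^ k)" for k
  proof -
    have "norm (t ^ k / fact k * (gen Lam q ^^ k) h \<eta>) = \<bar>t\<bar> ^ k / fact k * \<bar>(gen Lam q ^^ k) h \<eta>\<bar>"
      by (simp add: abs_mult power_abs)
    also have "\<dots> \<le> \<bar>t\<bar> ^ k / fact k * ((2 * Q) ^ k * B)"
      by (intro mult_left_mono bound) simp
    also have "\<dots> = B * (inverse (fact k) * (\<bar>t\<bar> * (2 * Q)) ^ k)"
      by (simp add: power_mult_distrib field_simps)
    finally show ?thesis .
  qed
  have "summable (\<lambda>k. B * (inverse (fact k) * (\<bar>t\<bar> * (2 * Q)) ^ k))"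
    by (intro summable_mult summable_exp)
  then show ?thesis
    by (rule summable_comparison_test'[OF _ majorant])
qed

lemma gen_power_particle_sum:
  assumes cons: "consistent Lam q"
    and down: "\<And>k j. k \<in> Lam \<Longrightarrow> j \<le> k \<Longrightarrow> j \<in> Lam"
    and "\<eta> \<in> Omega Lam"
  shows "(gen Lam q ^^ k) (particle_sum h) \<eta> = particle_sum ((gen Lam q ^^ k) h) \<eta>"
proof (cases "npart \<eta>")
  case 0
  have empty: "particle_sum f \<xi> = 0" if "npart \<xi> = 0" for f and \<xi> :: "'a \<Rightarrow> nat"
    using that by (simp add: particle_sum_def npart_def)
  have "(gen Lam q ^^ k) (particle_sum h) \<eta> = (gen Lam q ^^ k) (\<lambda>_. 0) \<eta>"
    using 0 assms(3) by (intro gen_power_cong[where n = 0]) (auto simp: Omega_n_def empty)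
  then show ?thesis
    using 0 by (simp add: gen_power_zero empty)
next
  case (Suc m)
  then have \<eta>_in: "\<eta> \<in> Omega_n Lam (Suc m)"
    using assms(3) by (simp add: Omega_n_def)
  have "(gen Lam q ^^ k) (particle_sum h) \<eta> = (gen Lam q ^^ k) (\<lambda>\<xi>. 1 / fact m * (annih ^^ m) h \<xi>) \<eta>"
    by (rule gen_power_cong[OF _ \<eta>_in]) (simp add: Omega_n_def annih_power_eq_particle_sum)
  also have "\<dots> = 1 / fact m * (annih ^^ m) ((gen Lam q ^^ k) h) \<eta>"
    by (simp only: gen_power_scale gen_power_annih_power_commute[OF cons down assms(3)])
  also have "\<dots> = particle_sum ((gen Lam q ^^ k) h) \<eta>"
    by (simp add: annih_power_eq_particle_sum Suc)
  finally show ?thesis .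
qed

lemma expect_particle_sum:
  assumes "consistent Lam q"
    and "\<And>k j. k \<in> Lam \<Longrightarrow> j \<le> k \<Longrightarrow> j \<in> Lam"
    and "\<eta> \<in> Omega Lam"
  shows "expect Lam q t (particle_sum h) \<eta> = particle_sum (expect Lam q t h) \<eta>"
proof -
  let ?a = "\<lambda>y k. t ^ k / fact k * (gen Lam q ^^ k) h (delta y)"
  have "(gen Lam q ^^ k) (particle_sum h) \<eta> = particle_sum ((gen Lam q ^^ k) h) \<eta>" for k
    using assms by (rule gen_power_particle_sum)
  then have "t ^ k / fact k * (gen Lam q ^^ k) (particle_sum h) \<eta> = (\<Sum>y\<in>UNIV. real (\<eta> y) * ?a y k)" for k
    unfolding particle_sum_def by (simp add: sum_distrib_left mult_ac)
  then have "expect Lam q t (particle_sum h) \<eta> = (\<Sum>k. \<Sum>y\<in>UNIV. real (\<eta> y) * ?a y k)"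
    by (simp add: expect_def)
  also have "\<dots> = (\<Sum>y\<in>UNIV. \<Sum>k. real (\<eta> y) * ?a y k)"
    by (intro suminf_sum summable_mult summable_gen_power_series)
  also have "\<dots> = particle_sum (expect Lam q t h) \<eta>"
    unfolding particle_sum_def expect_def by (intro sum.cong refl suminf_mult summable_gen_power_series)
  finally show ?thesis .
qed

theorem corollary3p10:
  fixes Lam :: "nat set"
    and q :: "('v::finite \<Rightarrow> nat) \<Rightarrow> ('v \<Rightarrow> nat) \<Rightarrow> real"
    and xs :: "'v list"
  assumes Lam_down: "\<And>k j. k \<in> Lam \<Longrightarrow> j \<le> k \<Longrightarrow> j \<in> Lam"
    and proc: "is_config_process Lam q"
    and cons: "consistent Lam q"
    and xs_in: "phi xs \<in> Omega_n Lam (length xs)"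
  shows "\<forall>v t. t \<ge> 0 \<longrightarrow>
           expect Lam q t (\<lambda>\<eta>. real (\<eta> v)) (phi xs)
             = (\<Sum>j<length xs. rw_prob Lam q t (xs ! j) v)"
proof (intro allI impI)
  fix v :: 'v and t :: real
  let ?at_v = "\<lambda>\<eta>::'v \<Rightarrow> nat. if \<eta> = delta v then 1 else 0 :: real"
  have "phi xs \<in> Omega Lam"
    using xs_in by (simp add: Omega_n_def)
  have "expect Lam q t (\<lambda>\<eta>. real (\<eta> v)) (phi xs) = expect Lam q t (particle_sum ?at_v) (phi xs)"
    by (simp only: particle_sum_indicator)
  also have "\<dots> = particle_sum (expect Lam q t ?at_v) (phi xs)"
    using cons Lam_down \<open>phi xs \<in> Omega Lam\<close> by (rule expect_particle_sum)
  also have "\<dots> = (\<Sum>j<length xs. rw_prob Lam q t (xs ! j) v)"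
    by (simp add: particle_sum_phi rw_prob_def)
  finally show "expect Lam q t (\<lambda>\<eta>. real (\<eta> v)) (phi xs) = (\<Sum>j<length xs. rw_prob Lam q t (xs ! j) v)" .
qed

end
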